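(* Let $Y=\{(x,y)\in\mathbb{R}^2:(x/a)^2+y^2=1\}$ with $1<a\le\sqrt2$, and let $p\in Y$. There exists a unique equilateral triangle inscribed in $Y$ (all three vertices on $Y$) having $p$ as one of its vertices.
   Context: Equilateral means with respect to the Euclidean metric on $\mathbb{R}^2$. *)

theory Defs
  imports "HOL-Analysis.Analysis"
begin

definition ellipseY :: "real \<Rightarrow> (real \<times> real) set" where
  "ellipseY a = {(x, y). (x / a)^2 + y^2 = 1}"

definition edist2 :: "real \<times> real \<Rightarrow> real \<times> real \<Rightarrow> real" where
  "edist2 u v = sqrt ((fst u - fst v)^2 + (snd u - snd v)^2)"

definition equilateral_triangle :: "(real \<times> real) set \<Rightarrow> bool" where
  "equilateral_triangle T \<longleftrightarrow> (\<exists>u v w. T = {u, v, w} \<and> edist2 u v > 0 \<and>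
      edist2 u v = edist2 v w \<and> edist2 v w = edist2 w u)"

end

theory Submission
  imports Defs
begin

text \<open>
  Write the ellipse as \<open>x\<^sup>2 + b y\<^sup>2 = b\<close> with \<open>b = a\<^sup>2 \<in> [1, 2]\<close> and let \<open>\<rho> = rot60\<close> be the
  rotation by \<open>-\<pi>/3\<close>. The equilateral triangles with vertex \<open>p\<close> are exactly the sets
  \<open>{p, p + v, p + \<rho> v}\<close> with \<open>v \<noteq> 0\<close>, so it suffices to show that exactly one such \<open>v\<close> puts
  both \<open>p + v\<close> and \<open>p + \<rho> v\<close> on the ellipse. Along a direction \<open>w\<close>, the point \<open>p + c w\<close>
  (\<open>c \<noteq> 0\<close>) lies on the ellipse iff \<open>c = -L(w)/Q(w)\<close>, where \<open>L\<close> and \<open>Q\<close> are the linear and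
  quadratic parts of the equation at \<open>p\<close>. Hence a common \<open>c\<close> for \<open>w\<close> and \<open>\<rho> w\<close> exists
  exactly when the cubic form \<open>L(w) Q(\<rho> w) - L(\<rho> w) Q(w)\<close> vanishes. On the unit circle
  this form is a first harmonic of amplitude at least \<open>2 |(x\<^sub>0, b y\<^sub>0)|\<close> plus a third
  harmonic of amplitude at most \<open>(b - 1)/2 |(x\<^sub>0, b y\<^sub>0)|\<close>. For \<open>b \<le> 2\<close> the first harmonic
  dominates enough that the form has a single antipodal pair of zeros, i.e. a single
  line of admissible directions, on which \<open>c w\<close> is then unique.
\<close>

lemma norm_Pair_real: "norm (a, b) = sqrt (a ^ 2 + b ^ 2)" for a b :: real
  by (simp add: norm_Pair)

lemma power2_norm_Pair_real: "norm (a, b) ^ 2 = a ^ 2 + b ^ 2" for a b :: real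
  by (simp add: norm_Pair_real)

lemma polar_Pair:
  fixes v :: "real \<times> real"
  obtains t where "v = norm v *\<^sub>R (cos t, sin t)"
proof (cases "v = 0")
  case False
  obtain a b where v: "v = (a, b)" by fastforce
  have "(a / norm v) ^ 2 + (b / norm v) ^ 2 = 1"
    using False by (simp add: v norm_Pair_real power_divide add_divide_distrib[symmetric] zero_prod_def)
  then obtain t where "a / norm v = cos t" "b / norm v = sin t"
    by (rule sincos_total_2pi)
  with False show ?thesis by (intro that[of t]) (simp add: v field_simps)
qed (auto simp: zero_prod_def)

lemma abs_cos_sin_comb_le: "\<bar>X * cos t + Z * sin t\<bar> \<le> norm (X, Z)"
  using Cauchy_Schwarz_ineq2[of "(X, Z)" "(cos t, sin t)"] by (simp add: norm_Pair_real)

lemma sin_treble_sin: "sin (3 * x) = 3 * sin x - 4 * sin x ^ 3" for x :: real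
proof -
  have "sin (3 * x) = sin (2 * x + x)" by simp
  also have "\<dots> = 3 * sin x - 4 * sin x ^ 3"
    unfolding sin_add cos_double sin_double using sin_cos_squared_add[of x] by algebra
  finally show ?thesis .
qed

section \<open>Equilateral triangles through a point\<close>

definition rot60 :: "real \<times> real \<Rightarrow> real \<times> real" where
  "rot60 v = ((fst v + sqrt 3 * snd v) / 2, (snd v - sqrt 3 * fst v) / 2)"

lemma rot60_Pair: "rot60 (a, b) = ((a + sqrt 3 * b) / 2, (b - sqrt 3 * a) / 2)"
  by (simp add: rot60_def)

lemma rot60_scaleR: "rot60 (c *\<^sub>R v) = c *\<^sub>R rot60 v"
  by (simp add: rot60_def algebra_simps)

lemma edist2_eq_dist: "edist2 u v = dist u v"
  by (simp add: edist2_def dist_prod_def dist_real_def)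

lemma norm_rot60: "norm (rot60 v) = norm v"
proof (cases v)
  case (Pair a b)
  have "((a + sqrt 3 * b) / 2) ^ 2 + ((b - sqrt 3 * a) / 2) ^ 2 = a ^ 2 + b ^ 2"
    by (simp add: power2_eq_square field_simps)
  then show ?thesis by (simp add: Pair rot60_Pair norm_Pair_real)
qed

lemma norm_diff_rot60: "norm (v - rot60 v) = norm v"
proof (cases v)
  case (Pair a b)
  have "(a - (a + sqrt 3 * b) / 2) ^ 2 + (b - (b - sqrt 3 * a) / 2) ^ 2 = a ^ 2 + b ^ 2"
    by (simp add: power2_eq_square field_simps)
  then show ?thesis by (simp add: Pair rot60_Pair norm_Pair_real)
qed

lemma rot60_cases:
  assumes "norm x = norm y" and "norm (x - y) = norm y"
  shows "x = rot60 y \<or> y = rot60 x"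
proof -
  obtain x1 x2 y1 y2 where xy: "x = (x1, x2)" "y = (y1, y2)" by fastforce
  define D where "D = y1 ^ 2 + y2 ^ 2"
  define cr where "cr = x1 * y2 - x2 * y1"
  have x: "x1 ^ 2 + x2 ^ 2 = D" and "(x1 - y1) ^ 2 + (x2 - y2) ^ 2 = D"
    using assms by (simp_all add: xy norm_Pair_real D_def)
  then have dot: "x1 * y1 + x2 * y2 = D / 2"
    by (simp add: D_def power2_eq_square algebra_simps)
  have "cr ^ 2 = (x1 ^ 2 + x2 ^ 2) * D - (x1 * y1 + x2 * y2) ^ 2"
    by (simp add: cr_def D_def power2_eq_square algebra_simps)
  \<comment> \<open>Lagrange's identity; the two squared distances below then multiply to zero.\<close>
  then have cr: "3 * cr ^ 2 = (3 * D / 2) ^ 2"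
    unfolding x dot by (simp add: power2_eq_square field_simps)
  have "(x1 - (y1 + sqrt 3 * y2) / 2) ^ 2 + (x2 - (y2 - sqrt 3 * y1) / 2) ^ 2
      = 3 * D / 2 - sqrt 3 * cr"
    using x dot by (simp add: D_def cr_def power2_eq_square field_simps)
  moreover have "(y1 - (x1 + sqrt 3 * x2) / 2) ^ 2 + (y2 - (x2 - sqrt 3 * x1) / 2) ^ 2
      = 3 * D / 2 + sqrt 3 * cr"
    using x dot by (simp add: D_def cr_def power2_eq_square field_simps)
  moreover have "(3 * D / 2 - sqrt 3 * cr) * (3 * D / 2 + sqrt 3 * cr) = 0"
    using cr by (simp add: power2_eq_square algebra_simps)
  ultimately show ?thesis
    by (auto simp: xy rot60_Pair)
qed

lemma equilateral_triangle_vertex_rot60: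
  "equilateral_triangle T \<and> p \<in> T \<longleftrightarrow> (\<exists>v. v \<noteq> 0 \<and> T = {p, p + v, p + rot60 v})"
proof
  assume "equilateral_triangle T \<and> p \<in> T"
  then obtain u v w where T: "T = {u, v, w}" "p \<in> T" and d: "dist u v > 0"
    "dist u v = dist v w" "dist v w = dist w u"
    unfolding equilateral_triangle_def edist2_eq_dist by blast
  obtain q r where qr: "T = {p, q, r}" "dist q p = dist r p" "dist q r = dist r p" "dist r p > 0"
  proof -
    from T consider "p = u" | "p = v" | "p = w" by auto
    then show ?thesis
      using d by cases (auto intro: that[of v w] that[of u w] that[of u v] simp: T dist_commute)
  qed
  have "norm (q - p) = norm (r - p)" "norm ((q - p) - (r - p)) = norm (r - p)"
    using qr by (simp_all add: dist_norm)
  then consider "q - p = rot60 (r - p)" | "r - p = rot60 (q - p)"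
    using rot60_cases by blast
  then show "\<exists>v. v \<noteq> 0 \<and> T = {p, p + v, p + rot60 v}"
  proof cases
    case 1
    then have "T = {p, p + (r - p), p + rot60 (r - p)}"
      using qr(1) by (auto simp: algebra_simps)
    moreover have "r - p \<noteq> 0" using qr(4) by simp
    ultimately show ?thesis by blast
  next
    case 2
    then have "T = {p, p + (q - p), p + rot60 (q - p)}"
      using qr(1) by (auto simp: algebra_simps)
    moreover have "q - p \<noteq> 0" using qr(2,4) by auto
    ultimately show ?thesis by blast
  qed
next
  assume "\<exists>v. v \<noteq> 0 \<and> T = {p, p + v, p + rot60 v}"
  then obtain v where "v \<noteq> 0" and T: "T = {p, p + v, p + rot60 v}" by blast
  then have "dist p (p + v) > 0" "dist p (p + v) = dist (p + v) (p + rot60 v)"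
    "dist (p + v) (p + rot60 v) = dist (p + rot60 v) p"
    by (simp_all add: dist_norm norm_minus_commute norm_rot60 norm_diff_rot60)
  with T show "equilateral_triangle T \<and> p \<in> T"
    unfolding equilateral_triangle_def edist2_eq_dist by blast
qed

section \<open>A perturbed cosine has one zero modulo \<pi>\<close>

text \<open>
  Zeros of \<open>C cos u + e u\<close> satisfy \<open>|cos u| \<le> 1/4\<close>; there \<open>C sin u > 3C/4 \<ge> |e' u|\<close> on
  \<open>(0, \<pi>)\<close>, so the function decreases strictly throughout the band that contains its zeros.
\<close>

context
  fixes C :: real and e e' :: "real \<Rightarrow> real"
  assumes C_pos: "0 < C"
    and e_deriv: "\<And>u. (e has_real_derivative e' u) (at u)"
    and e_bound: "\<And>u. \<bar>e u\<bar> \<le> C / 4"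
    and e'_bound: "\<And>u. \<bar>e' u\<bar> \<le> 3 * C / 4"
    and e_antiperiodic: "\<And>u. e (u + pi) = - e u"
    and e_on_circle: "\<And>u v. cos u = cos v \<Longrightarrow> sin u = sin v \<Longrightarrow> e u = e v"
begin

lemma perturbed_cos_zero_abs_cos_le:
  assumes "C * cos u + e u = 0"
  shows "\<bar>cos u\<bar> \<le> 1 / 4"
proof -
  have "C * \<bar>cos u\<bar> = \<bar>e u\<bar>"
    using assms C_pos by (metis abs_minus_cancel abs_mult abs_of_pos add_eq_0_iff)
  also have "\<dots> \<le> C * (1 / 4)" using e_bound by simp
  finally show ?thesis using C_pos by simp
qed

lemma perturbed_cos_deriv_neg:
  assumes "\<bar>cos u\<bar> \<le> 1 / 4" and "0 < sin u"
  shows "- C * sin u + e' u < 0"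
proof -
  have "cos u ^ 2 \<le> (1 / 4) ^ 2"
    using assms(1) by (metis abs_ge_zero power2_abs power_mono)
  then have "(3 / 4) ^ 2 < sin u ^ 2"
    using sin_cos_squared_add[of u] by (simp add: power2_eq_square)
  then have "3 / 4 < sin u"
    using assms(2) by (smt (verit) power_mono)
  then have "C * (3 / 4) < C * sin u" using C_pos by simp
  then show ?thesis using e'_bound[of u] by simp
qed

lemma perturbed_cos_no_two_zeros_0_pi:
  assumes "0 < x" "x < y" "y < pi" "C * cos x + e x = 0" "C * cos y + e y = 0"
  shows False
proof -
  have deriv: "\<And>u. ((\<lambda>u. C * cos u + e u) has_real_derivative - C * sin u + e' u) (at u)"
    by (auto intro!: derivative_eq_intros e_deriv)
  obtain z where z: "x < z" "z < y" and "- C * sin z + e' z = 0"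
    using MVT2[OF \<open>x < y\<close> deriv] assms(4,5) by auto
  moreover have "0 < sin z" using z assms by (intro sin_gt_zero) auto
  moreover have "cos y \<le> cos z" "cos z \<le> cos x"
    using z assms by (auto intro!: cos_monotone_0_pi_le)
  then have "\<bar>cos z\<bar> \<le> 1 / 4"
    using perturbed_cos_zero_abs_cos_le[OF assms(4)] perturbed_cos_zero_abs_cos_le[OF assms(5)]
    by (simp add: abs_le_iff)
  ultimately show False using perturbed_cos_deriv_neg by force
qed

lemma perturbed_cos_zero_antipodal:
  obtains u0 where "C * cos u0 + e u0 = 0"
    and "\<And>u. C * cos u + e u = 0 \<Longrightarrow>
           (cos u, sin u) = (cos u0, sin u0) \<or> (cos u, sin u) = - (cos u0, sin u0)"
proof -
  let ?g = "\<lambda>u. C * cos u + e u"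
  have g_antiperiodic: "?g (u + pi) = - ?g u" for u
    using e_antiperiodic by simp
  have "0 < ?g 0" using e_bound[of 0] C_pos by (simp add: abs_le_iff)
  moreover have "continuous_on {0..pi} ?g"
    using e_deriv by (intro continuous_intros) (meson DERIV_isCont continuous_at_imp_continuous_on)
  ultimately obtain u0 where u0: "0 \<le> u0" "u0 \<le> pi" "?g u0 = 0"
    using IVT2'[of ?g pi 0 0] g_antiperiodic[of 0] by force
  have "u0 \<noteq> 0" "u0 \<noteq> pi"
    using perturbed_cos_zero_abs_cos_le[OF u0(3)] by auto
  with u0 have u0_between: "0 < u0" "u0 < pi" by auto
  have upper_half: "(cos u, sin u) = (cos u0, sin u0)" if "?g u = 0" "0 < sin u" for u
  proof -
    define v where "v = arccos (cos u)"
    have cos_v: "cos v = cos u" unfolding v_def by simp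
    have sin_v: "sin v = sin u"
      unfolding v_def using sin_arccos_abs[of "cos u"] sin_cos_sqrt[of u] that by simp
    have "0 \<le> v" "v \<le> pi" unfolding v_def using arccos_bounded by auto
    moreover have "v \<noteq> 0" "v \<noteq> pi" using sin_v that by auto
    moreover have "?g v = 0" using e_on_circle[OF cos_v sin_v] cos_v that by simp
    ultimately have "v = u0"
      using perturbed_cos_no_two_zeros_0_pi u0 u0_between
      by (metis linorder_neqE_linordered_idom order_le_less)
    then show ?thesis using cos_v sin_v by simp
  qed
  show ?thesis
  proof (rule that[OF u0(3)])
    fix u assume gu: "?g u = 0"
    consider "0 < sin u" | "sin u < 0" | "sin u = 0" by linarith
    then show "(cos u, sin u) = (cos u0, sin u0) \<or> (cos u, sin u) = - (cos u0, sin u0)"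
    proof cases
      case 1 then show ?thesis using upper_half gu by blast
    next
      case 2
      have "?g (u + pi) = 0" using g_antiperiodic[of u] gu by simp
      moreover have "0 < sin (u + pi)" using 2 by simp
      ultimately have "(cos (u + pi), sin (u + pi)) = (cos u0, sin u0)"
        by (rule upper_half)
      then show ?thesis by simp
    next
      case 3
      then have "\<bar>cos u\<bar> = 1" using sin_cos_squared_add[of u] by (auto simp: power2_eq_1_iff)
      then show ?thesis using perturbed_cos_zero_abs_cos_le[OF gu] by simp
    qed
  qed
qed

end

definition chord_defect_trig :: "real \<Rightarrow> real \<Rightarrow> real \<Rightarrow> real \<Rightarrow> real" where
  "chord_defect_trig b X Z t = (b * X + sqrt 3 * Z) * cos t + (Z - sqrt 3 * b * X) * sin t
      + (b - 1) / 2 * (X * cos (3 * t) + Z * sin (3 * t))"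

text \<open>
  The first harmonic has amplitude \<open>2 |(b X, Z)| \<ge> 2 |(X, Z)|\<close>, the third one at most
  \<open>(b - 1)/2 |(X, Z)|\<close>; this is where \<open>b \<le> 2\<close> enters.
\<close>

lemma chord_defect_trig_zero_antipodal:
  assumes "1 \<le> b" "b \<le> 2" "(X, Z) \<noteq> 0"
  obtains t0 where "chord_defect_trig b X Z t0 = 0"
    and "\<And>t. chord_defect_trig b X Z t = 0 \<Longrightarrow>
           (cos t, sin t) = (cos t0, sin t0) \<or> (cos t, sin t) = - (cos t0, sin t0)"
proof -
  define k where "k = (b - 1) / 2"
  define A where "A = norm (X, Z)"
  define C where "C = norm (b * X + sqrt 3 * Z, Z - sqrt 3 * b * X)"
  obtain psi where "(b * X + sqrt 3 * Z, Z - sqrt 3 * b * X) = C *\<^sub>R (cos psi, sin psi)"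
    unfolding C_def by (rule polar_Pair)
  then have psi: "b * X + sqrt 3 * Z = C * cos psi" "Z - sqrt 3 * b * X = C * sin psi"
    by simp_all
  define e where "e u = k * (X * cos (3 * (u + psi)) + Z * sin (3 * (u + psi)))" for u
  define e' where "e' u = 3 * k * (Z * cos (3 * (u + psi)) - X * sin (3 * (u + psi)))" for u
  have shift: "chord_defect_trig b X Z (u + psi) = C * cos u + e u" for u
  proof -
    have "chord_defect_trig b X Z (u + psi)
        = C * (cos psi * cos (u + psi) + sin psi * sin (u + psi)) + e u"
      unfolding chord_defect_trig_def psi e_def k_def by (simp add: algebra_simps)
    also have "cos psi * cos (u + psi) + sin psi * sin (u + psi) = cos u"
      using cos_diff[of "u + psi" psi] by (simp add: mult.commute)
    finally show ?thesis .
  qed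
  have k: "0 \<le> k" "k \<le> 1 / 2" using assms by (auto simp: k_def)
  have "X ^ 2 \<le> (b * X) ^ 2"
    using assms(1) mult_right_mono[of 1 "b ^ 2" "X ^ 2"] by (simp add: power_mult_distrib one_le_power)
  then have "(2 * A) ^ 2 \<le> 4 * ((b * X) ^ 2 + Z ^ 2)"
    unfolding power_mult_distrib A_def power2_norm_Pair_real by simp
  also have "\<dots> = C ^ 2"
    unfolding C_def power2_norm_Pair_real by (simp add: power2_eq_square algebra_simps)
  finally have "2 * A \<le> C" by (rule power2_le_imp_le) (simp add: C_def)
  moreover have "0 < A" using assms(3) by (simp add: A_def)
  ultimately have C_pos: "0 < C" by linarith
  have "k * A \<le> 1 / 2 * A" using k \<open>0 < A\<close> by (intro mult_right_mono) auto
  with \<open>2 * A \<le> C\<close> have kA: "k * A \<le> C / 4" by linarith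
  have e_bound: "\<bar>e u\<bar> \<le> C / 4" for u
  proof -
    have "\<bar>e u\<bar> \<le> k * A"
      unfolding e_def A_def abs_mult using k abs_cos_sin_comb_le by (simp add: mult_left_mono)
    with kA show ?thesis by simp
  qed
  have e'_bound: "\<bar>e' u\<bar> \<le> 3 * C / 4" for u
  proof -
    have "\<bar>Z * cos (3 * (u + psi)) + (- X) * sin (3 * (u + psi))\<bar> \<le> A"
      using abs_cos_sin_comb_le[of Z _ "- X"] by (simp add: A_def norm_Pair_real add.commute)
    then have "\<bar>e' u\<bar> \<le> 3 * (k * A)"
      unfolding e'_def abs_mult using k by (simp add: mult_left_mono)
    with kA show ?thesis by simp
  qed
  have e_deriv: "(e has_real_derivative e' u) (at u)" for u
    unfolding e_def e'_def by (auto intro!: derivative_eq_intros simp: algebra_simps)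
  have e_antiperiodic: "e (u + pi) = - e u" for u
  proof -
    have "cos (3 * (u + pi + psi)) = - cos (3 * (u + psi))"
      "sin (3 * (u + pi + psi)) = - sin (3 * (u + psi))"
      using cos_treble_cos[of "u + pi + psi"] cos_treble_cos[of "u + psi"]
        sin_treble_sin[of "u + pi + psi"] sin_treble_sin[of "u + psi"]
      by (simp_all add: add.commute add.left_commute del: distrib_left_numeral)
    then show ?thesis by (simp add: e_def algebra_simps)
  qed
  have e_on_circle: "e u = e v" if "cos u = cos v" "sin u = sin v" for u v
    unfolding e_def using that by (simp add: cos_treble_cos sin_treble_sin cos_add sin_add)
  obtain u0 where u0: "C * cos u0 + e u0 = 0" and antipodal:
    "\<And>u. C * cos u + e u = 0 \<Longrightarrow>
       (cos u, sin u) = (cos u0, sin u0) \<or> (cos u, sin u) = - (cos u0, sin u0)"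
    using perturbed_cos_zero_antipodal[OF C_pos e_deriv e_bound e'_bound e_antiperiodic e_on_circle]
    by blast
  show ?thesis
  proof (rule that[of "u0 + psi"])
    show "chord_defect_trig b X Z (u0 + psi) = 0" using u0 shift by simp
    fix t assume "chord_defect_trig b X Z t = 0"
    then have "C * cos (t - psi) + e (t - psi) = 0" using shift[of "t - psi"] by simp
    then have "(cos (t - psi), sin (t - psi)) = (cos u0, sin u0) \<or>
               (cos (t - psi), sin (t - psi)) = - (cos u0, sin u0)"
      by (rule antipodal)
    then show "(cos t, sin t) = (cos (u0 + psi), sin (u0 + psi)) \<or>
               (cos t, sin t) = - (cos (u0 + psi), sin (u0 + psi))"
      using cos_add[of "t - psi" psi] sin_add[of "t - psi" psi] by (auto simp: cos_add sin_add)
  qed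
qed

section \<open>Chords of the ellipse\<close>

definition conic_lin :: "real \<Rightarrow> real \<times> real \<Rightarrow> real \<times> real \<Rightarrow> real" where
  "conic_lin b p v = 2 * (fst p * fst v + b * snd p * snd v)"

definition conic_quad :: "real \<Rightarrow> real \<times> real \<Rightarrow> real" where
  "conic_quad b v = fst v ^ 2 + b * snd v ^ 2"

text \<open>
  For \<open>c \<noteq> 0\<close>, the points \<open>p + c v\<close> and \<open>p + c rot60 v\<close> lie on the conic for the same
  value of \<open>c\<close> only if this cubic form vanishes at \<open>v\<close>.
\<close>

definition chord_defect :: "real \<Rightarrow> real \<times> real \<Rightarrow> real \<times> real \<Rightarrow> real" where
  "chord_defect b p v =
     conic_lin b p v * conic_quad b (rot60 v) - conic_lin b p (rot60 v) * conic_quad b v"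

lemma mem_ellipseY_iff: "0 < a \<Longrightarrow> p \<in> ellipseY a \<longleftrightarrow> fst p ^ 2 + a ^ 2 * snd p ^ 2 = a ^ 2"
  by (cases p) (auto simp: ellipseY_def power_divide field_simps)

lemma ellipseY_add_iff:
  assumes "0 < a" and "p \<in> ellipseY a"
  shows "p + v \<in> ellipseY a \<longleftrightarrow> conic_lin (a ^ 2) p v + conic_quad (a ^ 2) v = 0"
proof -
  have "(fst p + fst v) ^ 2 + a ^ 2 * (snd p + snd v) ^ 2 - a ^ 2
      = conic_lin (a ^ 2) p v + conic_quad (a ^ 2) v + (fst p ^ 2 + a ^ 2 * snd p ^ 2 - a ^ 2)"
    by (simp add: conic_lin_def conic_quad_def power2_eq_square algebra_simps)
  with assms show ?thesis by (auto simp: mem_ellipseY_iff)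
qed

lemma conic_lin_scaleR: "conic_lin b p (c *\<^sub>R v) = c * conic_lin b p v"
  by (simp add: conic_lin_def algebra_simps)

lemma conic_quad_scaleR: "conic_quad b (c *\<^sub>R v) = c ^ 2 * conic_quad b v"
  by (simp add: conic_quad_def power_mult_distrib algebra_simps)

lemma conic_quad_pos:
  assumes "0 < b" and "v \<noteq> 0"
  shows "0 < conic_quad b v"
proof -
  obtain x y where v: "v = (x, y)" by fastforce
  with assms(2) consider "x \<noteq> 0" | "y \<noteq> 0" by (auto simp: zero_prod_def)
  then show ?thesis
    using assms(1) by cases (auto simp: conic_quad_def v add_pos_nonneg add_nonneg_pos)
qed

lemma chord_defect_scaleR: "chord_defect b p (c *\<^sub>R v) = c ^ 3 * chord_defect b p v"
  by (simp add: chord_defect_def rot60_scaleR conic_lin_scaleR conic_quad_scaleR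
      power2_eq_square power3_eq_cube algebra_simps)

lemma conic_lin_rot60_eq_0:
  assumes "conic_lin b p v = 0" and "conic_lin b p (rot60 v) = 0" and "v \<noteq> 0"
  shows "fst p = 0 \<and> b * snd p = 0"
proof -
  obtain c s where v: "v = (c, s)" by fastforce
  define X Z where "X = fst p" and "Z = b * snd p"
  have lin: "conic_lin b p (x, y) = 2 * (X * x + Z * y)" for x y
    by (simp add: conic_lin_def X_def Z_def)
  have dot: "X * c + Z * s = 0" and "X * (c + sqrt 3 * s) + Z * (s - sqrt 3 * c) = 0"
    using assms(1,2) unfolding v rot60_Pair lin by (simp_all add: field_simps)
  moreover have "X * (c + sqrt 3 * s) + Z * (s - sqrt 3 * c)
      = (X * c + Z * s) + sqrt 3 * (X * s - Z * c)"
    by (simp add: algebra_simps)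
  ultimately have cross: "X * s - Z * c = 0" by simp
  have "X * (c ^ 2 + s ^ 2) = c * (X * c + Z * s) + s * (X * s - Z * c)"
    and "Z * (c ^ 2 + s ^ 2) = s * (X * c + Z * s) - c * (X * s - Z * c)"
    by (simp_all add: power2_eq_square algebra_simps)
  moreover have "c ^ 2 + s ^ 2 \<noteq> 0" using assms(3) by (simp add: v zero_prod_def)
  ultimately have "X = 0" "Z = 0" using dot cross by auto
  then show ?thesis by (simp add: X_def Z_def)
qed

lemma chord_defect_polar:
  "chord_defect b p (cos t, sin t) = chord_defect_trig b (fst p) (b * snd p) t"
proof -
  have identity:
    "2 * (x * c + b * y * s) * (((c + r * s) / 2) ^ 2 + b * ((s - r * c) / 2) ^ 2)
       - 2 * (x * ((c + r * s) / 2) + b * y * ((s - r * c) / 2)) * (c ^ 2 + b * s ^ 2)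
     = (b * x + r * (b * y)) * c + (b * y - r * b * x) * s
       + (b - 1) / 2 * (x * (4 * c ^ 3 - 3 * c) + b * y * (3 * s - 4 * s ^ 3))"
    if "c ^ 2 + s ^ 2 = 1" "r ^ 2 = 3" for c s r x y :: real
    using that by (simp add: field_simps power2_eq_square power3_eq_cube) algebra
  show ?thesis
    using identity[of "cos t" "sin t" "sqrt 3" "fst p" "snd p"]
    by (simp add: chord_defect_def chord_defect_trig_def conic_lin_def conic_quad_def rot60_Pair
        cos_treble_cos sin_treble_sin)
qed

lemma chord_defect_zeros_collinear:
  assumes "1 \<le> b" "b \<le> 2" "p \<noteq> 0"
  obtains w0 where "w0 \<noteq> 0" "chord_defect b p w0 = 0"
    "\<And>v. chord_defect b p v = 0 \<Longrightarrow> \<exists>c. v = c *\<^sub>R w0"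
proof -
  have "(fst p, b * snd p) \<noteq> 0" using assms by (cases p) (simp add: zero_prod_def)
  then obtain t0 where t0: "chord_defect_trig b (fst p) (b * snd p) t0 = 0" and antipodal:
    "\<And>t. chord_defect_trig b (fst p) (b * snd p) t = 0 \<Longrightarrow>
       (cos t, sin t) = (cos t0, sin t0) \<or> (cos t, sin t) = - (cos t0, sin t0)"
    using chord_defect_trig_zero_antipodal assms(1,2) by metis
  show ?thesis
  proof (rule that[of "(cos t0, sin t0)"])
    show "(cos t0, sin t0) \<noteq> 0" by (simp add: zero_prod_def) (metis sin_zero_abs_cos_one abs_zero zero_neq_one)
    show "chord_defect b p (cos t0, sin t0) = 0" using t0 by (simp add: chord_defect_polar)
    fix v assume v: "chord_defect b p v = 0"
    obtain t where t: "v = norm v *\<^sub>R (cos t, sin t)" by (rule polar_Pair)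
    show "\<exists>c. v = c *\<^sub>R (cos t0, sin t0)"
    proof (cases "v = 0")
      case False
      then have "chord_defect b p (cos t, sin t) = 0"
        using v chord_defect_scaleR[of b p "norm v" "(cos t, sin t)"] t by simp
      then have "chord_defect_trig b (fst p) (b * snd p) t = 0" by (simp add: chord_defect_polar)
      then have "(cos t, sin t) = (cos t0, sin t0) \<or> (cos t, sin t) = - (cos t0, sin t0)"
        by (rule antipodal)
      then show ?thesis using t by (metis scaleR_minus_right scaleR_minus_left)
    next
      case True
      then show ?thesis by (intro exI[of _ 0]) (simp add: zero_prod_def)
    qed
  qed
qed

lemma conic_point_scaleR_iff:
  assumes "c \<noteq> 0" and "conic_quad b w \<noteq> 0"
  shows "conic_lin b p (c *\<^sub>R w) + conic_quad b (c *\<^sub>R w) = 0 \<longleftrightarrow>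
         c = - conic_lin b p w / conic_quad b w"
proof -
  have "conic_lin b p (c *\<^sub>R w) + conic_quad b (c *\<^sub>R w)
      = c * (conic_lin b p w + c * conic_quad b w)"
    by (simp add: conic_lin_scaleR conic_quad_scaleR power2_eq_square algebra_simps)
  also have "\<dots> = 0 \<longleftrightarrow> conic_lin b p w + c * conic_quad b w = 0"
    using assms(1) by simp
  also have "\<dots> \<longleftrightarrow> c = - conic_lin b p w / conic_quad b w"
    using assms(2) by (auto simp: field_simps)
  finally show ?thesis .
qed

lemma conic_lin_ne_0_if_chord_defect_eq_0:
  assumes "0 < b" "p \<noteq> 0" "w \<noteq> 0" "chord_defect b p w = 0"
  shows "conic_lin b p w \<noteq> 0"
proof
  assume lin: "conic_lin b p w = 0"
  with assms(4) have "conic_lin b p (rot60 w) * conic_quad b w = 0"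
    by (simp add: chord_defect_def)
  then have "conic_lin b p (rot60 w) = 0" using conic_quad_pos[OF assms(1,3)] by simp
  then have "fst p = 0 \<and> b * snd p = 0" using conic_lin_rot60_eq_0 lin assms(3) by blast
  with assms(1,2) show False by (cases p) (simp add: zero_prod_def)
qed

lemma rot60_chord_scaleR_iff:
  assumes "0 < b" "w \<noteq> 0" "chord_defect b p w = 0" "c \<noteq> 0"
  shows "(conic_lin b p (c *\<^sub>R w) + conic_quad b (c *\<^sub>R w) = 0 \<and>
          conic_lin b p (rot60 (c *\<^sub>R w)) + conic_quad b (rot60 (c *\<^sub>R w)) = 0) \<longleftrightarrow>
         c = - conic_lin b p w / conic_quad b w"
proof -
  have "rot60 w \<noteq> 0" using assms(2) norm_rot60 by (metis norm_eq_zero)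
  then have Q: "0 < conic_quad b w" "0 < conic_quad b (rot60 w)"
    using conic_quad_pos assms(1,2) by auto
  then have "- conic_lin b p (rot60 w) / conic_quad b (rot60 w) = - conic_lin b p w / conic_quad b w"
    using assms(3) by (simp add: chord_defect_def frac_eq_eq)
  with Q assms(4) show ?thesis by (simp add: rot60_scaleR conic_point_scaleR_iff)
qed

lemma ex1_rot60_chord_ellipseY:
  assumes "1 \<le> a" "a \<le> sqrt 2" "p \<in> ellipseY a"
  shows "\<exists>!v. v \<noteq> 0 \<and> p + v \<in> ellipseY a \<and> p + rot60 v \<in> ellipseY a"
proof -
  define b where "b = a ^ 2"
  have a: "0 < a" using assms(1) by simp
  have b: "1 \<le> b" "b \<le> 2"
    using assms(1,2) power_mono[OF assms(2), of 2] by (simp_all add: b_def one_le_power)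
  have "p \<noteq> 0" using assms(3) a by (auto simp: mem_ellipseY_iff)
  then obtain w0 where w0: "w0 \<noteq> 0" "chord_defect b p w0 = 0"
    and collinear: "\<And>v. chord_defect b p v = 0 \<Longrightarrow> \<exists>c. v = c *\<^sub>R w0"
    using chord_defect_zeros_collinear b by blast
  let ?L = "conic_lin b p" and ?Q = "conic_quad b"
  let ?on = "\<lambda>v. p + v \<in> ellipseY a"
  have on_iff: "?on v \<longleftrightarrow> ?L v + ?Q v = 0" for v
    unfolding b_def by (rule ellipseY_add_iff[OF a assms(3)])
  define c0 where "c0 = - ?L w0 / ?Q w0"
  have "c0 \<noteq> 0"
    using conic_lin_ne_0_if_chord_defect_eq_0[of b p w0] conic_quad_pos[of b w0] w0 b \<open>p \<noteq> 0\<close>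
    by (simp add: c0_def)
  have on_multiple: "?on (c *\<^sub>R w0) \<and> ?on (rot60 (c *\<^sub>R w0)) \<longleftrightarrow> c = c0" if "c \<noteq> 0" for c
    using rot60_chord_scaleR_iff[of b w0 p c] w0 b that by (simp add: on_iff c0_def)
  show ?thesis
  proof (rule ex1I[of _ "c0 *\<^sub>R w0"])
    show "c0 *\<^sub>R w0 \<noteq> 0 \<and> ?on (c0 *\<^sub>R w0) \<and> ?on (rot60 (c0 *\<^sub>R w0))"
      using on_multiple \<open>c0 \<noteq> 0\<close> w0 by simp
    fix v assume v: "v \<noteq> 0 \<and> ?on v \<and> ?on (rot60 v)"
    then have "?L v = - ?Q v" "?L (rot60 v) = - ?Q (rot60 v)"
      by (simp_all add: on_iff eq_neg_iff_add_eq_0)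
    then have "chord_defect b p v = 0" by (simp add: chord_defect_def)
    then obtain c where c: "v = c *\<^sub>R w0" using collinear by blast
    with v have "c \<noteq> 0" by auto
    with v c on_multiple show "v = c0 *\<^sub>R w0" by simp
  qed
qed

theorem mainTheorem17:
  fixes a :: real and p :: "real \<times> real"
  assumes "1 < a" and "a \<le> sqrt 2" and "p \<in> ellipseY a"
  shows "\<exists>!T. equilateral_triangle T \<and> T \<subseteq> ellipseY a \<and> p \<in> T"
proof -
  have "\<exists>!v. v \<noteq> 0 \<and> p + v \<in> ellipseY a \<and> p + rot60 v \<in> ellipseY a"
    using assms by (intro ex1_rot60_chord_ellipseY) auto
  then obtain v0 where v0: "v0 \<noteq> 0" "p + v0 \<in> ellipseY a" "p + rot60 v0 \<in> ellipseY a"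
    and unique: "\<And>v. v \<noteq> 0 \<Longrightarrow> p + v \<in> ellipseY a \<Longrightarrow> p + rot60 v \<in> ellipseY a \<Longrightarrow> v = v0"
    by blast
  show ?thesis
  proof (rule ex1I[of _ "{p, p + v0, p + rot60 v0}"])
    show "equilateral_triangle {p, p + v0, p + rot60 v0} \<and>
          {p, p + v0, p + rot60 v0} \<subseteq> ellipseY a \<and> p \<in> {p, p + v0, p + rot60 v0}"
      using equilateral_triangle_vertex_rot60 v0 assms(3) by blast
    fix T assume T: "equilateral_triangle T \<and> T \<subseteq> ellipseY a \<and> p \<in> T"
    then obtain v where "v \<noteq> 0" "T = {p, p + v, p + rot60 v}"
      using equilateral_triangle_vertex_rot60 by blast
    with T unique show "T = {p, p + v0, p + rot60 v0}" by auto
  qed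
qed

end
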